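(* Let $n\ge1$ and let $\epsilon_{ij}\in\{0,1\}$ be given for all $1\le i,j\le n$ with $|i-j|\le 1$. Let $w$ be the number of pairs $(u,v)\in\{0,1\}^n\times\{0,1\}^n$ such that $\epsilon_{ij}=\delta_{u_i,v_j}$ for all $1\le i,j\le n$ with $|i-j|\le1$ (where $\delta$ is the Kronecker delta). If \[ \epsilon_{i-1,i-1}+\epsilon_{i,i-1}+\epsilon_{i-1,i}+\epsilon_{i,i}\in\{0,2,4\}\quad\text{for all } i\in\{2,\dots,n\}, \] then $w=2$; otherwise $w=0$.
   Context: In the paper, such a family $(\epsilon_{ij})$ is called a "string realizable configuration of weight $w$", with $w$ as defined in the claim, for the alphabet $\Sigma=\{0,1\}$ (the case $k=2$, $r=1$). *)

theory Defs
  imports Main "HOL-Library.FuncSet"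
begin

definition kdelta :: "bool \<Rightarrow> bool \<Rightarrow> nat" where
  "kdelta a b = (if a = b then 1 else 0)"

definition weight :: "nat \<Rightarrow> (nat \<Rightarrow> nat \<Rightarrow> nat) \<Rightarrow> nat" where
  "weight n eps = card {(u, v). u \<in> {1..n} \<rightarrow>\<^sub>E (UNIV :: bool set) \<and>
      v \<in> {1..n} \<rightarrow>\<^sub>E (UNIV :: bool set) \<and>
      (\<forall>i\<in>{1..n}. \<forall>j\<in>{1..n}. (i \<le> j + 1 \<and> j \<le> i + 1) \<longrightarrow> eps i j = kdelta (u i) (v j))}"

end

theory Submission
  imports Defs
begin

text \<open>Write \<open>e i j\<close> for \<open>\<epsilon>\<^sub>i\<^sub>j = 1\<close>; then \<open>(u, v)\<close> realizes \<open>\<epsilon>\<close> iff \<open>e i j \<longleftrightarrow> u\<^sub>i = v\<^sub>j\<close>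
  on the band \<open>|i - j| \<le> 1\<close>. Along the path \<open>u\<^sub>1, v\<^sub>1, u\<^sub>2, v\<^sub>2, \<dots>\<close> the entries
  \<open>e 1 1, e 2 1, e 2 2, \<dots>\<close> determine each letter from the previous one, so a realizing pair is
  fixed by \<open>u\<^sub>1\<close>, and both choices of \<open>u\<^sub>1\<close> give candidates. The only constraints left unused
  are the entries \<open>e (i - 1) i\<close>; going around the unit square with corners \<open>i - 1, i\<close>,
  such an entry is forced to be the one predicted by the other three exactly when the square
  contains an even number of ones.\<close>

lemma eq_kdelta_iff:
  "x \<in> {0, 1} \<Longrightarrow> x = kdelta a b \<longleftrightarrow> (x = 1) = (a = b)"
  by (auto simp: kdelta_def)

lemma sum4_even_iff:
  fixes a b c d :: nat
  assumes "a \<in> {0, 1}" "b \<in> {0, 1}" "c \<in> {0, 1}" "d \<in> {0, 1}"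
  shows "a + b + c + d \<in> {0, 2, 4} \<longleftrightarrow> ((a = 1) = (b = 1)) = ((c = 1) = (d = 1))"
  using assms by auto

definition realizes :: "nat \<Rightarrow> (nat \<Rightarrow> nat \<Rightarrow> bool) \<Rightarrow> (nat \<Rightarrow> bool) \<Rightarrow> (nat \<Rightarrow> bool) \<Rightarrow> bool" where
  "realizes n e u v \<longleftrightarrow>
    (\<forall>i\<in>{1..n}. \<forall>j\<in>{1..n}. i \<le> j + 1 \<and> j \<le> i + 1 \<longrightarrow> e i j = (u i = v j))"

definition realizing_pairs :: "nat \<Rightarrow> (nat \<Rightarrow> nat \<Rightarrow> bool) \<Rightarrow> ((nat \<Rightarrow> bool) \<times> (nat \<Rightarrow> bool)) set" where
  "realizing_pairs n e = {(u, v). u \<in> {1..n} \<rightarrow>\<^sub>E UNIV \<and> v \<in> {1..n} \<rightarrow>\<^sub>E UNIV \<and> realizes n e u v}"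

definition square_consistent :: "(nat \<Rightarrow> nat \<Rightarrow> bool) \<Rightarrow> nat \<Rightarrow> bool" where
  "square_consistent e i \<longleftrightarrow> ((e (i - 1) (i - 1) = e i (i - 1)) = (e (i - 1) i = e i i))"

fun realizing_u :: "(nat \<Rightarrow> nat \<Rightarrow> bool) \<Rightarrow> bool \<Rightarrow> nat \<Rightarrow> bool" where
  "realizing_u e b 0 = b"
| "realizing_u e b (Suc 0) = b"
| "realizing_u e b (Suc (Suc i)) = ((realizing_u e b (Suc i) = e (Suc i) (Suc i)) = e (Suc (Suc i)) (Suc i))"

definition realizing_v :: "(nat \<Rightarrow> nat \<Rightarrow> bool) \<Rightarrow> bool \<Rightarrow> nat \<Rightarrow> bool" where
  "realizing_v e b i = (realizing_u e b i = e i i)"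

lemma realizing_u_Suc:
  "1 \<le> i \<Longrightarrow> realizing_u e b (Suc i) = (realizing_v e b i = e (Suc i) i)"
  by (cases i) (auto simp: realizing_v_def)

definition realizing_pair :: "nat \<Rightarrow> (nat \<Rightarrow> nat \<Rightarrow> bool) \<Rightarrow> bool \<Rightarrow> (nat \<Rightarrow> bool) \<times> (nat \<Rightarrow> bool)" where
  "realizing_pair n e b = (restrict (realizing_u e b) {1..n}, restrict (realizing_v e b) {1..n})"

lemma realizes_square_consistent:
  assumes "realizes n e u v" and "i \<in> {2..n}"
  shows "square_consistent e i"
proof -
  obtain k where i: "i = Suc k" and k: "k \<in> {1..n}"
    using assms(2) by (cases i) auto
  have "e k k = (u k = v k)" "e (Suc k) k = (u (Suc k) = v k)"
    "e k (Suc k) = (u k = v (Suc k))" "e (Suc k) (Suc k) = (u (Suc k) = v (Suc k))"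
    using assms i k unfolding realizes_def by auto
  then show ?thesis
    unfolding square_consistent_def i by auto
qed

lemma realizes_determined:
  assumes "realizes n e u v"
  shows "1 \<le> i \<Longrightarrow> i \<le> n \<Longrightarrow> u i = realizing_u e (u 1) i \<and> v i = realizing_v e (u 1) i"
proof (induction i rule: nat_induct_at_least)
  case base
  then show ?case
    using assms(1) by (auto simp: realizes_def realizing_v_def)
next
  case (Suc i)
  then have "u i = realizing_u e (u 1) i \<and> v i = realizing_v e (u 1) i"
    by simp
  moreover have "e (Suc i) i = (u (Suc i) = v i)" "e (Suc i) (Suc i) = (u (Suc i) = v (Suc i))"
    using assms(1) Suc.hyps Suc.prems unfolding realizes_def by auto
  ultimately show ?case
    using Suc.hyps by (auto simp: realizing_u_Suc realizing_v_def)
qed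

lemma realizing_pair_realizes:
  assumes "\<forall>i\<in>{2..n}. square_consistent e i"
  shows "realizes n e (realizing_u e b) (realizing_v e b)"
  unfolding realizes_def
proof (intro ballI impI)
  fix i j assume i: "i \<in> {1..n}" and j: "j \<in> {1..n}" and adjacent: "i \<le> j + 1 \<and> j \<le> i + 1"
  consider "j = i" | "i = Suc j" | "j = Suc i"
    using adjacent by linarith
  then show "e i j = (realizing_u e b i = realizing_v e b j)"
  proof cases
    case 1
    then show ?thesis by (auto simp: realizing_v_def)
  next
    case 2
    then show ?thesis using j by (auto simp: realizing_u_Suc)
  next
    case 3
    then have "square_consistent e (Suc i)"
      using assms i j by auto
    then show ?thesis
      using i 3 by (auto simp: square_consistent_def realizing_v_def realizing_u_Suc)
  qed
qed

lemma realizes_restrict [simp]: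
  "{1..n} \<subseteq> A \<Longrightarrow> realizes n e (restrict u A) (restrict v A) = realizes n e u v"
  by (auto simp: realizes_def)

lemma realizing_pairs_eq:
  "realizing_pairs n e =
    (if \<forall>i\<in>{2..n}. square_consistent e i then range (realizing_pair n e) else {})"
proof (cases "\<forall>i\<in>{2..n}. square_consistent e i")
  case False
  then show ?thesis
    using realizes_square_consistent by (auto simp: realizing_pairs_def)
next
  case True
  have "(u, v) = realizing_pair n e (u 1)" if "(u, v) \<in> realizing_pairs n e" for u v
  proof -
    from that have u: "u \<in> {1..n} \<rightarrow>\<^sub>E UNIV" and v: "v \<in> {1..n} \<rightarrow>\<^sub>E UNIV"
      and realizes: "realizes n e u v"
      by (simp_all add: realizing_pairs_def)
    have "restrict u {1..n} = restrict (realizing_u e (u 1)) {1..n}"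
      "restrict v {1..n} = restrict (realizing_v e (u 1)) {1..n}"
      by (intro restrict_ext; metis atLeastAtMost_iff realizes_determined[OF realizes])+
    with u v show ?thesis
      by (simp add: PiE_restrict realizing_pair_def)
  qed
  then have "realizing_pairs n e \<subseteq> range (realizing_pair n e)"
    by fastforce
  moreover have "range (realizing_pair n e) \<subseteq> realizing_pairs n e"
    using realizing_pair_realizes[OF True] by (auto simp: realizing_pairs_def realizing_pair_def)
  ultimately show ?thesis
    using True by auto
qed

lemma card_realizing_pairs:
  assumes "n \<ge> 1"
  shows "card (realizing_pairs n e) = (if \<forall>i\<in>{2..n}. square_consistent e i then 2 else 0)"
proof -
  have "fst (realizing_pair n e b) 1 = b" for b
    using assms by (simp add: realizing_pair_def)
  then have "inj (realizing_pair n e)"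
    by (intro inj_on_inverseI)
  then show ?thesis
    by (simp add: realizing_pairs_eq card_image)
qed

lemma weight_eq_card_realizing_pairs:
  assumes "\<forall>i\<in>{1..n}. \<forall>j\<in>{1..n}. i \<le> j + 1 \<and> j \<le> i + 1 \<longrightarrow> eps i j \<in> {0, 1}"
  shows "weight n eps = card (realizing_pairs n (\<lambda>i j. eps i j = 1))"
  unfolding weight_def realizing_pairs_def realizes_def
  using assms by (simp add: eq_kdelta_iff cong: conj_cong)

lemma square_consistent_iff_sum_even:
  fixes eps :: "nat \<Rightarrow> nat \<Rightarrow> nat"
  assumes "\<forall>i\<in>{1..n}. \<forall>j\<in>{1..n}. i \<le> j + 1 \<and> j \<le> i + 1 \<longrightarrow> eps i j \<in> {0, 1}"
    and "i \<in> {2..n}"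
  shows "square_consistent (\<lambda>i j. eps i j = 1) i \<longleftrightarrow>
    eps (i - 1) (i - 1) + eps i (i - 1) + eps (i - 1) i + eps i i \<in> {0, 2, 4}"
proof -
  obtain k where i: "i = Suc k" and k: "k \<in> {1..n}" "Suc k \<in> {1..n}"
    using assms(2) by (cases i) auto
  have "eps (i - 1) (i - 1) \<in> {0, 1}" "eps i (i - 1) \<in> {0, 1}"
    "eps (i - 1) i \<in> {0, 1}" "eps i i \<in> {0, 1}"
    using assms(1) k unfolding i by auto
  then show ?thesis
    unfolding square_consistent_def by (rule sum4_even_iff[symmetric])
qed

theorem mainTheorem2:
  fixes n :: nat and eps :: "nat \<Rightarrow> nat \<Rightarrow> nat"
  assumes "n \<ge> 1"
    and "\<forall>i\<in>{1..n}. \<forall>j\<in>{1..n}. (i \<le> j + 1 \<and> j \<le> i + 1) \<longrightarrow> eps i j \<in> {0, 1}"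
  shows "weight n eps =
    (if \<forall>i\<in>{2..n}. eps (i - 1) (i - 1) + eps i (i - 1) + eps (i - 1) i + eps i i \<in> {0, 2, 4}
     then 2 else 0)"
proof -
  have "weight n eps = card (realizing_pairs n (\<lambda>i j. eps i j = 1))"
    using assms(2) by (rule weight_eq_card_realizing_pairs)
  also have "\<dots> = (if \<forall>i\<in>{2..n}. square_consistent (\<lambda>i j. eps i j = 1) i then 2 else 0)"
    using assms(1) by (rule card_realizing_pairs)
  finally show ?thesis
    using square_consistent_iff_sum_even[OF assms(2)] by simp
qed

end
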